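(* Let $c,d>0$ with $\frac{cd}{c+d}\le1$. Then $\frac12F\!\left(c,d;c+d;\frac12\right)<1$.
   Context: $F(a,b;c;x)$ is the Gaussian hypergeometric function $\sum_{n\ge0}\frac{(a)_n(b)_n}{(c)_n}\frac{x^n}{n!}$ ($|x|<1$), with $(a)_n=a(a+1)\cdots(a+n-1)$, $(a)_0=1$. *)

theory Defs
  imports "HOL-Analysis.Analysis"
begin

text \<open>Gaussian hypergeometric function F(a,b;c;x) = sum_n (a)_n (b)_n / (c)_n * x^n / n!,
  intended for |x| < 1 (where the series converges).\<close>
definition hyp2F1 :: "real \<Rightarrow> real \<Rightarrow> real \<Rightarrow> real \<Rightarrow> real" where
  "hyp2F1 a b c x = (\<Sum>n. pochhammer a n * pochhammer b n / pochhammer c n * x ^ n / fact n)"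

end

theory Submission
  imports Defs
begin

text \<open>
  Write F(c,d;c+d;x) = \<Sum>n. k n * x^n with the coefficients
  k n = (c)_n (d)_n / ((c+d)_n n!).  Consecutive coefficients satisfy
  k (n+1) = k n * (c+n)(d+n) / ((c+d+n)(n+1)), and the hypothesis
  cd/(c+d) \<le> 1, i.e. cd \<le> c+d, makes this ratio at most 1, and strictly
  less than 1 as soon as n \<ge> 1.  Hence 0 < k n \<le> 1 for all n and k n < 1
  for n \<ge> 2.  Comparing termwise with the geometric series gives
  F(c,d;c+d;x) < 1/(1-x) for every 0 < x < 1; the theorem is the case x = 1/2.
\<close>

definition hyp_coeff :: "real \<Rightarrow> real \<Rightarrow> nat \<Rightarrow> real" where
  "hyp_coeff c d n = pochhammer c n * pochhammer d n / pochhammer (c + d) n / fact n"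

lemma hyp2F1_eq_coeff_series:
  "hyp2F1 c d (c + d) x = (\<Sum>n. hyp_coeff c d n * x ^ n)"
  unfolding hyp2F1_def hyp_coeff_def by simp

definition hyp_ratio :: "real \<Rightarrow> real \<Rightarrow> nat \<Rightarrow> real" where
  "hyp_ratio c d n = (c + n) * (d + n) / ((c + d + n) * (n + 1))"

lemma hyp_coeff_Suc:
  assumes "c > 0" "d > 0"
  shows "hyp_coeff c d (Suc n) = hyp_coeff c d n * hyp_ratio c d n"
proof -
  have "pochhammer (c + d) n > 0" using assms by (intro pochhammer_pos) auto
  moreover have "c + d + real n > 0" using assms by auto
  ultimately show ?thesis
    unfolding hyp_coeff_def hyp_ratio_def by (simp add: pochhammer_Suc field_simps)
qed

lemma hyp_ratio_pos:
  assumes "c > 0" "d > 0"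
  shows "0 < hyp_ratio c d n"
  using assms by (simp add: hyp_ratio_def)

text \<open>The key inequality: the denominator minus the numerator of the ratio is
  (c + d - cd) + n, so cd \<le> c+d makes the ratio at most 1, and strictly
  less than 1 once n \<ge> 1.\<close>
lemma hyp_ratio_le_one:
  assumes "c > 0" "d > 0" "c * d \<le> c + d"
  shows "hyp_ratio c d n \<le> 1"
    and "n \<ge> 1 \<Longrightarrow> hyp_ratio c d n < 1"
proof -
  have den: "(c + d + n) * (n + 1) > 0" using assms by auto
  have diff: "(c + d + n) * (n + 1) - (c + n) * (d + n) = (c + d - c * d) + real n"
    by (simp add: algebra_simps)
  show "hyp_ratio c d n \<le> 1"
    using diff den assms(3) unfolding hyp_ratio_def by (simp add: divide_le_eq)
  assume "n \<ge> 1"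
  then show "hyp_ratio c d n < 1"
    using diff den assms(3) unfolding hyp_ratio_def by (simp add: divide_less_eq)
qed

text \<open>Starting from k 0 = 1 and multiplying by ratios in (0,1] keeps k n in (0,1].\<close>
lemma hyp_coeff_bounds:
  assumes "c > 0" "d > 0" "c * d \<le> c + d"
  shows "0 < hyp_coeff c d n" and "hyp_coeff c d n \<le> 1"
proof (induction n)
  case 0
  { case 1 show ?case by (simp add: hyp_coeff_def) }
  { case 2 show ?case by (simp add: hyp_coeff_def) }
next
  case (Suc n)
  show "0 < hyp_coeff c d (Suc n)" "hyp_coeff c d (Suc n) \<le> 1"
    using Suc.IH hyp_ratio_pos[OF assms(1,2), of n] hyp_ratio_le_one(1)[OF assms, of n]
    by (simp_all add: hyp_coeff_Suc[OF assms(1,2)] mult_le_one)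
qed

text \<open>From n = 2 on, the strict ratio bound at n - 1 makes k n < 1; this strictness
  is what makes the final inequality strict.\<close>
lemma hyp_coeff_less_one:
  assumes "c > 0" "d > 0" "c * d \<le> c + d" "n \<ge> 2"
  shows "hyp_coeff c d n < 1"
proof -
  obtain m where n: "n = Suc m" and m: "m \<ge> 1" using assms(4) by (cases n) auto
  have "hyp_coeff c d m * hyp_ratio c d m \<le> hyp_ratio c d m"
    using hyp_coeff_bounds[OF assms(1-3), of m] hyp_ratio_pos[OF assms(1,2), of m]
    by (intro mult_left_le_one_le) auto
  also have "\<dots> < 1" using hyp_ratio_le_one(2)[OF assms(1-3) m] .
  finally have "hyp_coeff c d m * hyp_ratio c d m < 1" .
  then show ?thesis unfolding n hyp_coeff_Suc[OF assms(1,2)] .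
qed

lemma series_less_geometric:
  fixes k :: "nat \<Rightarrow> real" and x :: real
  assumes "0 < x" "x < 1" "\<And>n. 0 \<le> k n" "\<And>n. k n \<le> 1" "k m < 1"
  shows "(\<Sum>n. k n * x ^ n) < 1 / (1 - x)"
proof -
  have geo: "summable (\<lambda>n. x ^ n)" using assms by (intro summable_geometric) simp
  have sk: "summable (\<lambda>n. k n * x ^ n)"
    by (rule summable_comparison_test[OF _ geo])
       (use assms in \<open>auto intro!: exI[of _ 0] mult_left_le_one_le\<close>)
  have le: "k n * x ^ n \<le> x ^ n" for n
    using assms by (intro mult_left_le_one_le) auto
  have lt: "k m * x ^ m < x ^ m"
    using assms by simp
  have "0 < (\<Sum>n. x ^ n - k n * x ^ n)"
    using le lt by (subst suminf_pos_iff) (auto intro!: summable_diff geo sk)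
  also have "\<dots> = 1 / (1 - x) - (\<Sum>n. k n * x ^ n)"
    using suminf_diff[OF geo sk] suminf_geometric[of x] assms by simp
  finally show ?thesis by simp
qed

lemma hyp2F1_less_geometric:
  assumes "c > 0" "d > 0" "c * d \<le> c + d" "0 < x" "x < 1"
  shows "hyp2F1 c d (c + d) x < 1 / (1 - x)"
  unfolding hyp2F1_eq_coeff_series
  using hyp_coeff_bounds[OF assms(1-3)] hyp_coeff_less_one[OF assms(1-3), of 2]
  by (intro series_less_geometric[OF assms(4,5)]) (auto intro: less_imp_le)

theorem mainTheorem7:
  fixes c d :: real
  assumes "c > 0" and "d > 0" and "c * d / (c + d) \<le> 1"
  shows "hyp2F1 c d (c + d) (1/2) / 2 < 1"
proof -
  have "c * d \<le> c + d" using assms by (simp add: divide_le_eq)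
  then have "hyp2F1 c d (c + d) (1/2) < 2"
    using hyp2F1_less_geometric[OF assms(1,2), of "1/2"] by simp
  then show ?thesis by simp
qed

end
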